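(* For every $n\ge1$: if $\Psi_n\in\mathrm{LTL}[\mathsf{X},\mathsf{wX},\mathsf{F},\mathsf{G}]$ satisfies $\Psi_n\equiv\Phi_n$ (i.e. $\mathcal L(\Psi_n)=\mathcal L(\Phi_n)$), then $\mathrm{size}(\Psi_n)\ge 2^n$.
   Context: Fix $n\ge1$ and atomic propositions $AP=\{\tilde p,\tilde q\}\cup\{p_1,\dots,p_n\}\cup\{q_1,\dots,q_n\}$ (all distinct), $\Sigma=2^{AP}$. Formulae in negation normal form are built from literals $p,\neg p$ ($p\in AP$) with $\land,\lor$ and temporal operators, interpreted on finite non-empty traces $\sigma\in\Sigma^+$ at positions $0\le i<|\sigma|$: $\mathsf{X}\phi$: $i+1<|\sigma|$ and $\phi$ at $i+1$; $\mathsf{wX}\phi$: $i+1=|\sigma|$ or $\phi$ at $i+1$; $\mathsf{F}\phi$/$\mathsf{G}\phi$: $\phi$ at some/every $j$ with $i\le j<|\sigma|$; $\mathsf O\phi$: $\phi$ at some $0\le j\le i$. $\mathcal L(\phi)=\{\sigma\in\Sigma^+:\sigma,0\models\phi\}$. $\mathrm{LTL}[\mathsf{X},\mathsf{wX},\mathsf{F},\mathsf{G}]$ is the set of such formulae using only temporal operators $\mathsf{X},\mathsf{wX},\mathsf{F},\mathsf{G}$. Size: literals 1, unary operators add 1, binary connectives sum sizes plus 1. $\Phi_n := \mathsf{F}\big(\tilde q\land\bigwedge_{i=1}^n\big((q_i\land\mathsf{O}(\tilde p\land p_i))\lor(\neg q_i\land\mathsf{O}(\tilde p\land\neg p_i))\big)\big)$.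 *)

theory Defs
  imports Main
begin

text \<open>Atomic propositions: Pt = p-tilde, Qt = q-tilde, P i = p_i, Q i = q_i.
  For a fixed n only Pt, Qt, P i, Q i with 1 \<le> i \<le> n are in AP.\<close>
datatype ap = Pt | Qt | P nat | Q nat

definition AP :: "nat \<Rightarrow> ap set" where
  "AP n = {Pt, Qt} \<union> P ` {1..n} \<union> Q ` {1..n}"

text \<open>Formulae in negation normal form.\<close>
datatype ltl =
    Lit ap | NLit ap
  | And ltl ltl | Or ltl ltl
  | Next ltl | WNext ltl | Fut ltl | Glob ltl | Once ltl

text \<open>Semantics on finite nonempty traces (lists of letters), position i < length.\<close>
fun sat :: "ap set list \<Rightarrow> nat \<Rightarrow> ltl \<Rightarrow> bool" where
  "sat w i (Lit p) = (p \<in> w ! i)"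
| "sat w i (NLit p) = (p \<notin> w ! i)"
| "sat w i (And a b) = (sat w i a \<and> sat w i b)"
| "sat w i (Or a b) = (sat w i a \<or> sat w i b)"
| "sat w i (Next a) = (i + 1 < length w \<and> sat w (i + 1) a)"
| "sat w i (WNext a) = (i + 1 = length w \<or> sat w (i + 1) a)"
| "sat w i (Fut a) = (\<exists>j. i \<le> j \<and> j < length w \<and> sat w j a)"
| "sat w i (Glob a) = (\<forall>j. i \<le> j \<and> j < length w \<longrightarrow> sat w j a)"
| "sat w i (Once a) = (\<exists>j. j \<le> i \<and> sat w j a)"

definition traces :: "nat \<Rightarrow> ap set list set" where
  "traces n = {w. w \<noteq> [] \<and> (\<forall>a \<in> set w. a \<subseteq> AP n)}"

definition lang :: "nat \<Rightarrow> ltl \<Rightarrow> ap set list set" where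
  "lang n \<phi> = {w \<in> traces n. sat w 0 \<phi>}"

fun size_ltl :: "ltl \<Rightarrow> nat" where
  "size_ltl (Lit p) = 1"
| "size_ltl (NLit p) = 1"
| "size_ltl (And a b) = size_ltl a + size_ltl b + 1"
| "size_ltl (Or a b) = size_ltl a + size_ltl b + 1"
| "size_ltl (Next a) = size_ltl a + 1"
| "size_ltl (WNext a) = size_ltl a + 1"
| "size_ltl (Fut a) = size_ltl a + 1"
| "size_ltl (Glob a) = size_ltl a + 1"
| "size_ltl (Once a) = size_ltl a + 1"

fun atoms :: "ltl \<Rightarrow> ap set" where
  "atoms (Lit p) = {p}"
| "atoms (NLit p) = {p}"
| "atoms (And a b) = atoms a \<union> atoms b"
| "atoms (Or a b) = atoms a \<union> atoms b"
| "atoms (Next a) = atoms a"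
| "atoms (WNext a) = atoms a"
| "atoms (Fut a) = atoms a"
| "atoms (Glob a) = atoms a"
| "atoms (Once a) = atoms a"

fun future_only :: "ltl \<Rightarrow> bool" where
  "future_only (Lit p) = True"
| "future_only (NLit p) = True"
| "future_only (And a b) = (future_only a \<and> future_only b)"
| "future_only (Or a b) = (future_only a \<and> future_only b)"
| "future_only (Next a) = future_only a"
| "future_only (WNext a) = future_only a"
| "future_only (Fut a) = future_only a"
| "future_only (Glob a) = future_only a"
| "future_only (Once a) = False"

definition LTL_XwXFG :: "nat \<Rightarrow> ltl set" where
  "LTL_XwXFG n = {\<phi>. future_only \<phi> \<and> atoms \<phi> \<subseteq> AP n}"

fun conj_list :: "ltl list \<Rightarrow> ltl" where
  "conj_list [a] = a"
| "conj_list (a # as) = And a (conj_list as)"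
| "conj_list [] = Or (Lit Pt) (NLit Pt)"

definition Phi :: "nat \<Rightarrow> ltl" where
  "Phi n = Fut (And (Lit Qt)
     (conj_list (map (\<lambda>i. Or (And (Lit (Q i)) (Once (And (Lit Pt) (Lit (P i)))))
                              (And (NLit (Q i)) (Once (And (Lit Pt) (NLit (P i))))))
                  [1..<n+1])))"

end

theory Submission
  imports Defs
begin

(*
  For a set B of subsets of {1..n}, let w_B be a word listing the letters {Qt} \<union> Q ` T' for
  T' \<in> B. Then Phi n holds on the word ({Pt} \<union> P ` T) w_B iff T \<in> B. On the other hand, the
  truth value at the first position of u @ v of a formula without past operators depends on v
  only through the set of its subformulas that hold at the start of v. So an equivalent
  future-only formula \<Psi> must assign distinct such sets to the 2^2^n words w_B, whence
  2^n \<le> card (subformulas \<Psi>) \<le> size_ltl \<Psi>.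
*)

fun subformulas :: "ltl \<Rightarrow> ltl set" where
  "subformulas (Lit p) = {Lit p}"
| "subformulas (NLit p) = {NLit p}"
| "subformulas (And a b) = insert (And a b) (subformulas a \<union> subformulas b)"
| "subformulas (Or a b) = insert (Or a b) (subformulas a \<union> subformulas b)"
| "subformulas (Next a) = insert (Next a) (subformulas a)"
| "subformulas (WNext a) = insert (WNext a) (subformulas a)"
| "subformulas (Fut a) = insert (Fut a) (subformulas a)"
| "subformulas (Glob a) = insert (Glob a) (subformulas a)"
| "subformulas (Once a) = insert (Once a) (subformulas a)"

lemma self_in_subformulas: "\<phi> \<in> subformulas \<phi>"
  by (cases \<phi>) auto

lemma finite_subformulas: "finite (subformulas \<phi>)"
  by (induction \<phi>) auto

lemma card_subformulas_le_size: "card (subformulas \<phi>) \<le> size_ltl \<phi>"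
proof (induction \<phi>)
  case (And a b)
  have "card (subformulas (And a b)) \<le> Suc (card (subformulas a) + card (subformulas b))"
    using card_Un_le[of "subformulas a" "subformulas b"]
    by (simp add: card_insert_if finite_subformulas)
  with And show ?case by simp
next
  case (Or a b)
  have "card (subformulas (Or a b)) \<le> Suc (card (subformulas a) + card (subformulas b))"
    using card_Un_le[of "subformulas a" "subformulas b"]
    by (simp add: card_insert_if finite_subformulas)
  with Or show ?case by simp
qed (auto simp: card_insert_if finite_subformulas)

lemma ex_shift_interval:
  "(\<exists>k. m + j \<le> k \<and> k < m + l \<and> R k) \<longleftrightarrow> (\<exists>k. j \<le> k \<and> k < l \<and> R (m + k))"
  for m :: nat
proof
  assume "\<exists>k. m + j \<le> k \<and> k < m + l \<and> R k"
  then obtain k where "m + j \<le> k" "k < m + l" "R k"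
    by blast
  then show "\<exists>k. j \<le> k \<and> k < l \<and> R (m + k)"
    by (intro exI[of _ "k - m"]) auto
next
  assume "\<exists>k. j \<le> k \<and> k < l \<and> R (m + k)"
  then obtain k where "j \<le> k" "k < l" "R (m + k)"
    by blast
  then show "\<exists>k. m + j \<le> k \<and> k < m + l \<and> R k"
    by (intro exI[of _ "m + k"]) auto
qed

lemma all_shift_interval:
  "(\<forall>k. m + j \<le> k \<and> k < m + l \<longrightarrow> R k) \<longleftrightarrow> (\<forall>k. j \<le> k \<and> k < l \<longrightarrow> R (m + k))"
  for m :: nat
  using ex_shift_interval[of m j l "\<lambda>k. \<not> R k"] by blast

lemma sat_append_future_only:
  assumes "future_only \<phi>" "j < length v"
  shows "sat (u @ v) (length u + j) \<phi> \<longleftrightarrow> sat v j \<phi>"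
  using assms
proof (induction \<phi> arbitrary: j)
  case (Next a)
  then show ?case using Next.IH[of "Suc j"] by auto
next
  case (WNext a)
  then show ?case using WNext.IH[of "Suc j"] by (cases "Suc j < length v") auto
next
  case (Fut a)
  then show ?case using ex_shift_interval[of "length u" j "length v"] by auto
next
  case (Glob a)
  then show ?case using all_shift_interval[of "length u" j "length v"] by auto
qed (auto simp: nth_append)

lemma sat_Fut_split:
  assumes "i \<le> m" "m < length w"
  shows "sat w i (Fut a) \<longleftrightarrow> (\<exists>j. i \<le> j \<and> j < m \<and> sat w j a) \<or> sat w m (Fut a)"
  using assms by (auto, metis not_le, meson le_trans)

lemma sat_Glob_split:
  assumes "i \<le> m" "m < length w"
  shows "sat w i (Glob a) \<longleftrightarrow> (\<forall>j. i \<le> j \<and> j < m \<longrightarrow> sat w j a) \<and> sat w m (Glob a)"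
  using assms by (auto, metis not_le)

lemma sat_append_cong:
  assumes "future_only \<phi>" "v \<noteq> []" "v' \<noteq> []"
    and "\<forall>\<chi>\<in>subformulas \<phi>. sat v 0 \<chi> \<longleftrightarrow> sat v' 0 \<chi>"
    and "i \<le> length u"
  shows "sat (u @ v) i \<phi> \<longleftrightarrow> sat (u @ v') i \<phi>"
proof -
  have ends: "length u < length (u @ v)" "length u < length (u @ v')"
    using assms(2,3) by simp_all
  have boundary: "sat (u @ v) (length u) \<psi> \<longleftrightarrow> sat (u @ v') (length u) \<psi>"
    if "future_only \<psi>" "sat v 0 \<psi> \<longleftrightarrow> sat v' 0 \<psi>" for \<psi>
    using sat_append_future_only[of \<psi> 0] that assms(2,3) by simp
  show ?thesis
    using assms(1,4,5)
  proof (induction \<phi> arbitrary: i)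
    case (Next a)
    show ?case
    proof (cases "i = length u")
      case True
      then show ?thesis using Next.prems boundary self_in_subformulas by blast
    next
      case False
      then have "Suc i \<le> length u" using Next.prems(3) by simp
      moreover have "Suc i < length (u @ v)" "Suc i < length (u @ v')"
        using calculation ends by (meson le_less_trans)+
      ultimately show ?thesis using Next.IH[of "Suc i"] Next.prems(1,2) by auto
    qed
  next
    case (WNext a)
    show ?case
    proof (cases "i = length u")
      case True
      then show ?thesis using WNext.prems boundary self_in_subformulas by blast
    next
      case False
      then have "Suc i \<le> length u" using WNext.prems(3) by simp
      moreover have "Suc i < length (u @ v)" "Suc i < length (u @ v')"
        using calculation ends by (meson le_less_trans)+
      ultimately show ?thesis using WNext.IH[of "Suc i"] WNext.prems(1,2) by auto
    qed
  next
    case (Fut a)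
    have "sat (u @ v) (length u) (Fut a) \<longleftrightarrow> sat (u @ v') (length u) (Fut a)"
      using Fut.prems boundary self_in_subformulas by blast
    moreover have "sat (u @ v) j a \<longleftrightarrow> sat (u @ v') j a" if "j < length u" for j
      using Fut that by auto
    ultimately show ?case
      using sat_Fut_split[OF Fut.prems(3) ends(1)] sat_Fut_split[OF Fut.prems(3) ends(2)] by blast
  next
    case (Glob a)
    have "sat (u @ v) (length u) (Glob a) \<longleftrightarrow> sat (u @ v') (length u) (Glob a)"
      using Glob.prems boundary self_in_subformulas by blast
    moreover have "sat (u @ v) j a \<longleftrightarrow> sat (u @ v') j a" if "j < length u" for j
      using Glob that by auto
    ultimately show ?case
      using sat_Glob_split[OF Glob.prems(3) ends(1)] sat_Glob_split[OF Glob.prems(3) ends(2)] by blast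
  qed (auto simp: nth_append)
qed

lemma card_distinguishable_suffixes_le:
  assumes "future_only \<phi>"
    and "\<And>x. x \<in> I \<Longrightarrow> w x \<noteq> []"
    and "\<And>x y. x \<in> I \<Longrightarrow> y \<in> I \<Longrightarrow> x \<noteq> y \<Longrightarrow> \<exists>u. sat (u @ w x) 0 \<phi> \<noteq> sat (u @ w y) 0 \<phi>"
  shows "card I \<le> 2 ^ card (subformulas \<phi>)"
proof -
  define profile where "profile x = {\<chi> \<in> subformulas \<phi>. sat (w x) 0 \<chi>}" for x
  have "inj_on profile I"
  proof (rule inj_onI, rule ccontr)
    fix x y assume xy: "x \<in> I" "y \<in> I" "profile x = profile y" "x \<noteq> y"
    then have "\<forall>\<chi>\<in>subformulas \<phi>. sat (w x) 0 \<chi> \<longleftrightarrow> sat (w y) 0 \<chi>"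
      unfolding profile_def by blast
    then have "sat (u @ w x) 0 \<phi> \<longleftrightarrow> sat (u @ w y) 0 \<phi>" for u
      using sat_append_cong assms(1,2) xy(1,2) by blast
    with assms(3)[OF xy(1,2,4)] show False by blast
  qed
  moreover have "profile ` I \<subseteq> Pow (subformulas \<phi>)"
    unfolding profile_def by blast
  ultimately have "card I \<le> card (Pow (subformulas \<phi>))"
    by (intro card_inj_on_le) (simp_all add: finite_subformulas)
  then show ?thesis
    by (simp add: card_Pow finite_subformulas)
qed

lemma sat_conj_list: "sat w i (conj_list xs) \<longleftrightarrow> (\<forall>x\<in>set xs. sat w i x)"
  by (induction xs rule: conj_list.induct) auto

lemma sat_Phi_iff:
  assumes "\<forall>j<length w. Pt \<in> w ! j \<longleftrightarrow> j = 0"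
  shows "sat w 0 (Phi n) \<longleftrightarrow> (\<exists>a\<in>set w. Qt \<in> a \<and> (\<forall>i\<in>{1..n}. Q i \<in> a \<longleftrightarrow> P i \<in> w ! 0))"
proof -
  have once: "sat w k (Once (And (Lit Pt) \<psi>)) \<longleftrightarrow> sat w 0 \<psi>" if "k < length w" for k \<psi>
  proof -
    have "\<forall>j\<le>k. Pt \<in> w ! j \<longleftrightarrow> j = 0"
      using assms that by auto
    then show ?thesis by auto
  qed
  have "sat w 0 (Phi n) \<longleftrightarrow>
        (\<exists>k<length w. Qt \<in> w ! k \<and> (\<forall>i\<in>{1..n}. Q i \<in> w ! k \<longleftrightarrow> P i \<in> w ! 0))"
    unfolding Phi_def
    by (auto simp: sat_conj_list once atLeastLessThanSuc_atLeastAtMost simp del: sat.simps(9) upt_Suc; blast)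
  then show ?thesis
    by (metis in_set_conv_nth)
qed

definition p_letter :: "nat set \<Rightarrow> ap set" where
  "p_letter T = insert Pt (P ` T)"

definition q_letter :: "nat set \<Rightarrow> ap set" where
  "q_letter T = insert Qt (Q ` T)"

lemma p_letter_simps [simp]:
  "Pt \<in> p_letter T" "Qt \<notin> p_letter T" "P i \<in> p_letter T \<longleftrightarrow> i \<in> T"
  by (auto simp: p_letter_def)

lemma q_letter_simps [simp]:
  "Pt \<notin> q_letter T" "Qt \<in> q_letter T" "Q i \<in> q_letter T \<longleftrightarrow> i \<in> T"
  by (auto simp: q_letter_def)

lemma p_letter_subset_AP: "T \<subseteq> {1..n} \<Longrightarrow> p_letter T \<subseteq> AP n"
  by (auto simp: p_letter_def AP_def)

lemma q_letter_subset_AP: "T \<subseteq> {1..n} \<Longrightarrow> q_letter T \<subseteq> AP n"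
  by (auto simp: q_letter_def AP_def)

text \<open>The empty letter keeps the word nonempty when B = {}; it satisfies no atomic proposition.\<close>
definition q_word :: "nat set set \<Rightarrow> ap set list" where
  "q_word B = (SOME vs. set vs = insert {} (q_letter ` B))"

lemma set_q_word: "finite B \<Longrightarrow> set (q_word B) = insert {} (q_letter ` B)"
  unfolding q_word_def by (rule someI_ex) (simp add: finite_list)

lemma q_word_not_Nil: "finite B \<Longrightarrow> q_word B \<noteq> []"
  using set_q_word[of B] by (metis empty_set insert_not_empty)

lemma finite_subset_Pow_atLeastAtMost: "B \<subseteq> Pow {1..n::nat} \<Longrightarrow> finite B"
  by (erule finite_subset) simp

lemma p_letter_q_word_in_traces:
  assumes "T \<subseteq> {1..n}" "B \<subseteq> Pow {1..n}"
  shows "p_letter T # q_word B \<in> traces n"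
proof -
  have "q_letter ` B \<subseteq> Pow (AP n)"
    using assms(2) q_letter_subset_AP by (metis PowD PowI image_subsetI subsetD)
  then have "set (p_letter T # q_word B) \<subseteq> Pow (AP n)"
    using assms p_letter_subset_AP by (simp add: set_q_word finite_subset_Pow_atLeastAtMost)
  then show ?thesis
    unfolding traces_def by auto
qed

lemma sat_Phi_p_letter_q_word:
  assumes "T \<subseteq> {1..n}" "B \<subseteq> Pow {1..n}"
  shows "sat (p_letter T # q_word B) 0 (Phi n) \<longleftrightarrow> T \<in> B"
proof -
  have vs: "set (q_word B) = insert {} (q_letter ` B)"
    using assms(2) by (simp add: set_q_word finite_subset_Pow_atLeastAtMost)
  then have "\<forall>j<length (p_letter T # q_word B). Pt \<in> (p_letter T # q_word B) ! j \<longleftrightarrow> j = 0"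
    by (auto simp: less_Suc_eq_0_disj dest!: nth_mem)
  then have "sat (p_letter T # q_word B) 0 (Phi n) \<longleftrightarrow>
             (\<exists>T'\<in>B. \<forall>i\<in>{1..n}. i \<in> T' \<longleftrightarrow> i \<in> T)"
    using vs by (simp add: sat_Phi_iff)
  also have "\<dots> \<longleftrightarrow> T \<in> B"
  proof
    assume "\<exists>T'\<in>B. \<forall>i\<in>{1..n}. i \<in> T' \<longleftrightarrow> i \<in> T"
    then obtain T' where "T' \<in> B" "\<forall>i\<in>{1..n}. i \<in> T' \<longleftrightarrow> i \<in> T"
      by blast
    moreover have "T' \<subseteq> {1..n}"
      using \<open>T' \<in> B\<close> assms(2) by blast
    ultimately have "T' = T"
      using assms(1) by blast
    with \<open>T' \<in> B\<close> show "T \<in> B" by simp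
  qed auto
  finally show ?thesis .
qed

theorem lemma5:
  fixes n :: nat and \<Psi> :: ltl
  assumes "n \<ge> 1"
    and "\<Psi> \<in> LTL_XwXFG n"
    and "lang n \<Psi> = lang n (Phi n)"
  shows "size_ltl \<Psi> \<ge> 2 ^ n"
proof -
  have future: "future_only \<Psi>"
    using assms(2) by (simp add: LTL_XwXFG_def)
  have accepts: "sat (p_letter T # q_word B) 0 \<Psi> \<longleftrightarrow> T \<in> B"
    if "T \<subseteq> {1..n}" "B \<subseteq> Pow {1..n}" for T B
    using assms(3) p_letter_q_word_in_traces[OF that] sat_Phi_p_letter_q_word[OF that]
    unfolding lang_def by blast
  have "card (Pow (Pow {1..n})) \<le> 2 ^ card (subformulas \<Psi>)"
  proof (rule card_distinguishable_suffixes_le[OF future])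
    show "q_word B \<noteq> []" if "B \<in> Pow (Pow {1..n})" for B
      using that by (simp add: q_word_not_Nil finite_subset_Pow_atLeastAtMost)
    fix B B' assume B: "B \<in> Pow (Pow {1..n})" and B': "B' \<in> Pow (Pow {1..n})" and "B \<noteq> B'"
    then obtain T where T: "T \<in> B \<longleftrightarrow> T \<notin> B'"
      by blast
    then have "T \<subseteq> {1..n}"
      using B B' by blast
    then show "\<exists>u. sat (u @ q_word B) 0 \<Psi> \<noteq> sat (u @ q_word B') 0 \<Psi>"
      using accepts B B' T by (intro exI[of _ "[p_letter T]"]) auto
  qed
  then have "2 ^ 2 ^ n \<le> (2::nat) ^ card (subformulas \<Psi>)"
    by (simp add: card_Pow)
  then show ?thesis
    using card_subformulas_le_size[of \<Psi>] by simp
qed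

end
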